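(* There exist a homogeneous suborder $A \subseteq \mathbb{R}$ and a countable set $X \subseteq \mathbb{R}\setminus A$ such that $A \cup X$ is not order-isomorphic to $A$.
   Context: A suborder $X \subseteq \mathbb{R}$ is homogeneous if for every open interval $I=(a,b)$ with $-\infty\le a<b\le\infty$ we have $X \cong X\cap I$ (order-isomorphism). *)

theory Defs
  imports "HOL-Analysis.Analysis" "HOL-Library.Extended_Real"
begin

definition order_iso :: "real set \<Rightarrow> real set \<Rightarrow> bool" where
  "order_iso X Y \<longleftrightarrow> (\<exists>f. bij_betw f X Y \<and> (\<forall>x\<in>X. \<forall>y\<in>X. x < y \<longrightarrow> f x < f y))"

definition open_ival :: "ereal \<Rightarrow> ereal \<Rightarrow> real set" where
  "open_ival a b = {x. a < ereal x \<and> ereal x < b}"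

definition homogeneous :: "real set \<Rightarrow> bool" where
  "homogeneous X \<longleftrightarrow> (\<forall>a b. a < b \<longrightarrow> order_iso X (X \<inter> open_ival a b))"

end

theory Submission
  imports Defs
begin

text \<open>Take the irrationals for \<open>A\<close> and the rationals for \<open>X\<close>, so that \<open>A \<union> X = \<real>\<close>.
  The irrationals are homogeneous: exhaust a given open interval by a bi-infinite strictly
  increasing sequence \<open>c\<close> of rationals; the piecewise linear map sending each integer \<open>k\<close>
  to \<open>c k\<close> has rational breakpoints and slopes, so it maps the irrationals exactly onto the
  irrationals of the interval. On the other hand \<open>\<real>\<close> is not isomorphic to a dense proper
  subset \<open>S\<close>: by completeness, an isomorphism would send the supremum of the preimage of
  \<open>S\<close> below a missing point \<open>z\<close> to a point of \<open>S\<close> that leaves no room for \<open>S\<close> between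
  itself and \<open>z\<close>.\<close>

lemma order_iso_strict_mono_image:
  assumes "strict_mono f"
  shows "order_iso A (f ` A)"
  unfolding order_iso_def
proof (intro exI conjI ballI impI)
  show "bij_betw f A (f ` A)"
    using strict_mono_imp_inj_on[OF assms] by (rule inj_on_imp_bij_betw)
  show "f x < f y" if "x < y" for x y
    using assms that by (rule strict_monoD)
qed

lemma irrationals_dense:
  fixes p q :: real
  assumes "p < q"
  shows "\<exists>s\<in>-\<rat>. p < s \<and> s < q"
  using real_interval_avoid_countable_set[OF assms countable_rat] by auto

lemma not_order_iso_UNIV_dense_proper_subset:
  fixes S :: "real set"
  assumes dense: "\<And>p q. p < q \<Longrightarrow> \<exists>s\<in>S. p < s \<and> s < q"
    and "z \<notin> S"
  shows "\<not> order_iso UNIV S"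
proof
  assume "order_iso UNIV S"
  then obtain f :: "real \<Rightarrow> real"
    where bij: "bij_betw f UNIV S" and mono: "\<And>x y. x < y \<Longrightarrow> f x < f y"
    unfolding order_iso_def by blast
  have le: "f x \<le> f y \<longleftrightarrow> x \<le> y" for x y
    using mono by (intro strict_mono_less_eq strict_monoI)
  have between: "\<exists>t. p < f t \<and> f t < q" if pq: "p < q" for p q
  proof -
    obtain s where "s \<in> S" "p < s" "s < q"
      using dense[OF pq] by blast
    moreover have "S = range f"
      using bij by (simp add: bij_betw_def)
    ultimately show ?thesis
      by blast
  qed
  define L where "L = {x. f x < z}"
  obtain x0 where "f x0 < z"
    using between[of "z - 1" z] by auto
  then have "L \<noteq> {}"
    unfolding L_def by blast
  obtain x1 where "z < f x1"
    using between[of z "z + 1"] by auto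
  then have "x \<le> x1" if "x \<in> L" for x
    using that le[of x1 x] unfolding L_def by auto
  then have bdd: "bdd_above L"
    by (rule bdd_aboveI)
  have "f (Sup L) \<noteq> z"
    using \<open>z \<notin> S\<close> bij by (auto simp: bij_betw_def)
  then consider "f (Sup L) < z" | "z < f (Sup L)"
    by linarith
  then show False
  proof cases
    case 1
    then obtain t where "f (Sup L) < f t" "f t < z"
      using between by blast
    then have "t \<in> L" "\<not> t \<le> Sup L"
      using le[of t "Sup L"] unfolding L_def by auto
    then show False
      using cSup_upper[OF _ bdd] by blast
  next
    case 2
    then obtain t where "z < f t" "f t < f (Sup L)"
      using between by blast
    then have "t < Sup L"
      using le[of "Sup L" t] by auto
    then obtain x where "x \<in> L" "t < x"
      using less_cSup_iff[OF \<open>L \<noteq> {}\<close> bdd] by blast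
    then show False
      using le[of x t] \<open>z < f t\<close> unfolding L_def by auto
  qed
qed

lemma strict_mono_bracket:
  fixes c :: "int \<Rightarrow> 'a::linorder"
  assumes "strict_mono c" "c k0 \<le> y" "y < c k1"
  shows "\<exists>k. c k \<le> y \<and> y < c (k + 1)"
proof -
  define K where "K = {k \<in> {k0..k1}. c k \<le> y}"
  have "finite K"
    unfolding K_def by (rule finite_subset[OF _ finite_atLeastAtMost_int]) blast
  have "k0 \<in> K"
    using assms strict_mono_less_eq[OF assms(1), of k1 k0] unfolding K_def by auto
  define k where "k = Max K"
  have "k \<in> K"
    unfolding k_def using \<open>finite K\<close> \<open>k0 \<in> K\<close> by (intro Max_in) auto
  then have "c k \<le> y" "k < k1"
    using assms strict_mono_less_eq[OF assms(1), of k1 k] unfolding K_def by auto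
  moreover have "y < c (k + 1)"
  proof (rule ccontr)
    assume "\<not> y < c (k + 1)"
    then have "k + 1 \<in> K"
      using \<open>k \<in> K\<close> \<open>k < k1\<close> unfolding K_def by auto
    then show False
      using Max_ge[OF \<open>finite K\<close>] unfolding k_def[symmetric] by fastforce
  qed
  ultimately show ?thesis
    by blast
qed

definition piecewise_linear :: "(int \<Rightarrow> real) \<Rightarrow> real \<Rightarrow> real" where
  "piecewise_linear c x = c \<lfloor>x\<rfloor> + (c (\<lfloor>x\<rfloor> + 1) - c \<lfloor>x\<rfloor>) * frac x"

lemma piecewise_linear_of_int_add:
  assumes "0 \<le> t" "t < 1"
  shows "piecewise_linear c (of_int k + t) = c k + (c (k + 1) - c k) * t"
proof -
  have "\<lfloor>of_int k + t\<rfloor> = k"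
    using assms by (simp add: floor_eq_iff)
  then show ?thesis
    unfolding piecewise_linear_def frac_def by simp
qed

lemma piecewise_linear_bounds:
  assumes "strict_mono c"
  shows "c \<lfloor>x\<rfloor> \<le> piecewise_linear c x" "piecewise_linear c x < c (\<lfloor>x\<rfloor> + 1)"
proof -
  have "0 < c (\<lfloor>x\<rfloor> + 1) - c \<lfloor>x\<rfloor>"
    using strict_monoD[OF assms, of "\<lfloor>x\<rfloor>" "\<lfloor>x\<rfloor> + 1"] by simp
  then have "0 \<le> (c (\<lfloor>x\<rfloor> + 1) - c \<lfloor>x\<rfloor>) * frac x"
    "(c (\<lfloor>x\<rfloor> + 1) - c \<lfloor>x\<rfloor>) * frac x < c (\<lfloor>x\<rfloor> + 1) - c \<lfloor>x\<rfloor>"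
    using frac_ge_0[of x] frac_lt_1[of x] by (simp_all add: mult_less_cancel_left1)
  then show "c \<lfloor>x\<rfloor> \<le> piecewise_linear c x" "piecewise_linear c x < c (\<lfloor>x\<rfloor> + 1)"
    unfolding piecewise_linear_def by linarith+
qed

lemma strict_mono_piecewise_linear:
  assumes "strict_mono c"
  shows "strict_mono (piecewise_linear c)"
proof
  fix x y :: real
  assume "x < y"
  show "piecewise_linear c x < piecewise_linear c y"
  proof (cases "\<lfloor>x\<rfloor> = \<lfloor>y\<rfloor>")
    case True
    have "0 < c (\<lfloor>x\<rfloor> + 1) - c \<lfloor>x\<rfloor>"
      using strict_monoD[OF assms, of "\<lfloor>x\<rfloor>" "\<lfloor>x\<rfloor> + 1"] by simp
    moreover have "frac x < frac y"
      using \<open>x < y\<close> True by (simp add: frac_def)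
    ultimately show ?thesis
      unfolding piecewise_linear_def True by simp
  next
    case False
    then have "\<lfloor>x\<rfloor> + 1 \<le> \<lfloor>y\<rfloor>"
      using floor_mono[of x y] \<open>x < y\<close> by linarith
    then have "c (\<lfloor>x\<rfloor> + 1) \<le> c \<lfloor>y\<rfloor>"
      by (simp add: strict_mono_less_eq[OF assms])
    then show ?thesis
      using piecewise_linear_bounds[OF assms, of x] piecewise_linear_bounds[OF assms, of y] by linarith
  qed
qed

lemma range_piecewise_linear:
  assumes "strict_mono c"
  shows "range (piecewise_linear c) = {y. (\<exists>k. c k \<le> y) \<and> (\<exists>k. y < c k)}"
proof
  show "range (piecewise_linear c) \<subseteq> {y. (\<exists>k. c k \<le> y) \<and> (\<exists>k. y < c k)}"
    using piecewise_linear_bounds[OF assms] by blast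
  show "{y. (\<exists>k. c k \<le> y) \<and> (\<exists>k. y < c k)} \<subseteq> range (piecewise_linear c)"
  proof safe
    fix y k0 k1
    assume "c k0 \<le> y" "y < c k1"
    then obtain k where k: "c k \<le> y" "y < c (k + 1)"
      using strict_mono_bracket[OF assms] by blast
    define d where "d = c (k + 1) - c k"
    have "0 < d"
      using strict_monoD[OF assms, of k "k + 1"] unfolding d_def by simp
    define t where "t = (y - c k) / d"
    have "0 \<le> t" "t < 1"
      using k \<open>0 < d\<close> unfolding t_def d_def by (simp_all add: divide_less_eq)
    have "piecewise_linear c (of_int k + t) = c k + d * t"
      unfolding d_def by (rule piecewise_linear_of_int_add[OF \<open>0 \<le> t\<close> \<open>t < 1\<close>])
    also have "\<dots> = y"
      using \<open>0 < d\<close> unfolding t_def by simp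
    finally show "y \<in> range (piecewise_linear c)"
      by (metis rangeI)
  qed
qed

lemma piecewise_linear_in_Rats_iff:
  assumes "strict_mono c" and "\<And>k. c k \<in> \<rat>"
  shows "piecewise_linear c x \<in> \<rat> \<longleftrightarrow> x \<in> \<rat>"
proof -
  define d where "d = c (\<lfloor>x\<rfloor> + 1) - c \<lfloor>x\<rfloor>"
  have "d \<noteq> 0" "d \<in> \<rat>"
    using strict_monoD[OF assms(1), of "\<lfloor>x\<rfloor>" "\<lfloor>x\<rfloor> + 1"] assms(2) unfolding d_def by auto
  have "x \<in> \<rat> \<longleftrightarrow> frac x \<in> \<rat>"
    using Rats_add[of "of_int \<lfloor>x\<rfloor>" "frac x"] Rats_diff[of x "of_int \<lfloor>x\<rfloor>"]
    by (auto simp: frac_def)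
  also have "\<dots> \<longleftrightarrow> c \<lfloor>x\<rfloor> + d * frac x \<in> \<rat>"
  proof
    assume "c \<lfloor>x\<rfloor> + d * frac x \<in> \<rat>"
    then have "(c \<lfloor>x\<rfloor> + d * frac x - c \<lfloor>x\<rfloor>) / d \<in> \<rat>"
      using assms(2) \<open>d \<in> \<rat>\<close> by (intro Rats_divide Rats_diff)
    then show "frac x \<in> \<rat>"
      using \<open>d \<noteq> 0\<close> by simp
  qed (use assms(2) \<open>d \<in> \<rat>\<close> in auto)
  finally show ?thesis
    unfolding piecewise_linear_def d_def by simp
qed

lemma rational_seq_cofinal_below:
  fixes m :: real and b :: ereal
  assumes "m < b"
  obtains u :: "nat \<Rightarrow> real"
  where "strict_mono u" "\<And>n. u n \<in> \<rat>" "\<And>n. m < u n" "\<And>n. ereal (u n) < b"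
    "\<And>y. ereal y < b \<Longrightarrow> \<exists>n. y < u n"
proof -
  obtain X :: "nat \<Rightarrow> real"
    where X: "\<And>i. ereal m < X i" "\<And>i. X i < b" "(\<lambda>i. ereal (X i)) \<longlonglongrightarrow> b"
    using ereal_incseq_approx[OF assms] by metis
  have rat_between: "\<exists>q\<in>\<rat>. r < q \<and> ereal q < b" if rb: "ereal r < b" for r
  proof -
    obtain s where "r < s" "ereal s < b"
      using ereal_dense2[OF rb] by auto
    then show ?thesis
      using Rats_dense_in_real[of r s] by (metis less_ereal.simps(1) order_less_trans)
  qed
  define P where "P n q \<longleftrightarrow> q \<in> \<rat> \<and> X n < q \<and> ereal q < b" for n q
  have "\<exists>u. \<forall>n. P n (u n) \<and> u n < u (Suc n)"
  proof (rule dependent_nat_choice)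
    show "\<exists>q. P 0 q"
      using rat_between[OF X(2)] unfolding P_def by blast
    show "\<exists>q'. P (Suc n) q' \<and> q < q'" if "P n q" for n q
      using rat_between[of "max q (X (Suc n))"] that X(2) unfolding P_def by auto
  qed
  then obtain u where u: "\<And>n. P n (u n)" "\<And>n. u n < u (Suc n)"
    by blast
  show thesis
  proof
    show "strict_mono u"
      using u(2) by (rule strict_mono_Suc_iff[THEN iffD2, rule_format])
    show "u n \<in> \<rat>" "m < u n" "ereal (u n) < b" for n
      using u(1)[of n] X(1)[of n] unfolding P_def by auto
    show "\<exists>n. y < u n" if yb: "ereal y < b" for y
    proof -
      obtain n where "ereal y < X n"
        using eventually_happens'[OF _ order_tendstoD(1)[OF X(3) yb]] by auto
      then have "y < u n"
        using u(1)[of n] unfolding P_def by auto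
      then show ?thesis ..
    qed
  qed
qed

lemma strict_mono_glue:
  fixes u v :: "nat \<Rightarrow> real"
  assumes "strict_mono u" "\<And>n. m < u n" "strict_mono v" "\<And>n. - m < v n"
  shows "strict_mono (\<lambda>k::int. if 0 \<le> k then u (nat k) else - v (nat (- k)))"
proof
  fix k l :: int
  assume "k < l"
  consider "0 \<le> k" | "l < 0" | "k < 0" "0 \<le> l"
    by linarith
  then show "(if 0 \<le> k then u (nat k) else - v (nat (- k))) < (if 0 \<le> l then u (nat l) else - v (nat (- l)))"
  proof cases
    case 1
    then show ?thesis
      using strict_monoD[OF assms(1), of "nat k" "nat l"] \<open>k < l\<close> by simp
  next
    case 2
    then show ?thesis
      using strict_monoD[OF assms(3), of "nat (- l)" "nat (- k)"] \<open>k < l\<close> by simp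
  next
    case 3
    then show ?thesis
      using assms(2)[of "nat l"] assms(4)[of "nat (- k)"] by simp
  qed
qed

lemma rational_chain_exhausting_open_ival:
  assumes "a < b"
  obtains c :: "int \<Rightarrow> real"
  where "strict_mono c" "\<And>k. c k \<in> \<rat>"
    "{y. (\<exists>k. c k \<le> y) \<and> (\<exists>k. y < c k)} = open_ival a b"
proof -
  obtain m where am: "a < ereal m" and mb: "ereal m < b"
    using ereal_dense2[OF assms] by blast
  obtain u :: "nat \<Rightarrow> real"
    where u: "strict_mono u" "\<And>n. u n \<in> \<rat>" "\<And>n. m < u n" "\<And>n. ereal (u n) < b"
    "\<And>y. ereal y < b \<Longrightarrow> \<exists>n. y < u n"
    using rational_seq_cofinal_below[OF mb] by blast
  have "ereal (- m) < - a"
    using am by (simp add: ereal_less_uminus_reorder)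
  then obtain v :: "nat \<Rightarrow> real" where v: "strict_mono v" "\<And>n. v n \<in> \<rat>" "\<And>n. - m < v n"
    "\<And>n. ereal (v n) < - a" "\<And>y. ereal y < - a \<Longrightarrow> \<exists>n. y < v n"
    using rational_seq_cofinal_below by blast
  define c where "c k = (if 0 \<le> k then u (nat k) else - v (nat (- k)))" for k
  show thesis
  proof
    show "strict_mono c"
      unfolding c_def using u(1,3) v(1,3) by (rule strict_mono_glue)
    show "c k \<in> \<rat>" for k
      using u(2) v(2) unfolding c_def by simp
    have in_ival: "a < c k \<and> c k < b" for k
    proof (cases "0 \<le> k")
      case True
      then show ?thesis
        using am u(3)[of "nat k"] u(4)[of "nat k"] unfolding c_def
        by (auto intro: order_less_trans)
    next
      case False
      have "a < ereal (- v (nat (- k)))"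
        using v(4)[of "nat (- k)"] by (simp add: ereal_less_uminus_reorder)
      moreover have "- v (nat (- k)) < m"
        using v(3)[of "nat (- k)"] by simp
      then have "ereal (- v (nat (- k))) < b"
        using mb by (metis less_ereal.simps(1) order_less_trans)
      ultimately show ?thesis
        using False unfolding c_def by simp
    qed
    have exhaust: "(\<exists>k. c k \<le> y) \<and> (\<exists>k. y < c k)" if ay: "a < ereal y" and yb: "ereal y < b" for y
    proof
      have "ereal (- y) < - a"
        using ay by (simp add: ereal_less_uminus_reorder)
      then obtain n where "- y < v n"
        using v(5) by blast
      then have "c (- int (Suc n)) \<le> y"
        using strict_monoD[OF v(1), of n "Suc n"] unfolding c_def by (simp del: of_nat_Suc)
      then show "\<exists>k. c k \<le> y" ..
      obtain n where "y < u n"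
        using u(5) yb by blast
      then have "y < c (int n)"
        unfolding c_def by simp
      then show "\<exists>k. y < c k" ..
    qed
    show "{y. (\<exists>k. c k \<le> y) \<and> (\<exists>k. y < c k)} = open_ival a b"
    proof (intro set_eqI iffI)
      fix y
      assume "y \<in> {y. (\<exists>k. c k \<le> y) \<and> (\<exists>k. y < c k)}"
      then obtain k l where "c k \<le> y" "y < c l"
        by auto
      have "a < ereal y"
        using in_ival[of k] \<open>c k \<le> y\<close> order_less_le_trans[of a "ereal (c k)" "ereal y"] by simp
      moreover have "ereal y < b"
        using in_ival[of l] \<open>y < c l\<close> order_less_trans[of "ereal y" "ereal (c l)" b] by simp
      ultimately show "y \<in> open_ival a b"
        unfolding open_ival_def by simp
    qed (use exhaust in \<open>auto simp: open_ival_def\<close>)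
  qed
qed

lemma homogeneous_irrationals: "homogeneous (- \<rat>)"
  unfolding homogeneous_def
proof (intro allI impI)
  fix a b :: ereal
  assume "a < b"
  then obtain c :: "int \<Rightarrow> real" where c: "strict_mono c" "\<And>k. c k \<in> \<rat>"
    "{y. (\<exists>k. c k \<le> y) \<and> (\<exists>k. y < c k)} = open_ival a b"
    using rational_chain_exhausting_open_ival by blast
  have "piecewise_linear c ` (- \<rat>) = - \<rat> \<inter> range (piecewise_linear c)"
    using piecewise_linear_in_Rats_iff[OF c(1,2)] by auto
  also have "\<dots> = - \<rat> \<inter> open_ival a b"
    unfolding range_piecewise_linear[OF c(1)] c(3) ..
  finally show "order_iso (- \<rat>) (- \<rat> \<inter> open_ival a b)"
    using order_iso_strict_mono_image[OF strict_mono_piecewise_linear[OF c(1)]] by metis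
qed

theorem corollary3:
  shows "\<exists>A X :: real set. A \<noteq> {} \<and> homogeneous A \<and> countable X \<and> X \<inter> A = {} \<and>
           \<not> order_iso (A \<union> X) A"
proof (intro exI conjI)
  show "- \<rat> \<noteq> ({} :: real set)"
    using irrationals_dense[of 0 1] by auto
  show "homogeneous (- \<rat>)"
    by (rule homogeneous_irrationals)
  show "countable (\<rat> :: real set)"
    by (rule countable_rat)
  show "\<rat> \<inter> - \<rat> = ({} :: real set)"
    by auto
  have "\<not> order_iso UNIV (- \<rat>)"
    using not_order_iso_UNIV_dense_proper_subset[OF irrationals_dense, of 0] by simp
  then show "\<not> order_iso (- \<rat> \<union> \<rat>) (- \<rat>)"
    by simp
qed

end
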